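(* Let $a>1$, $\sigma^2>0$, $d\in(0,\frac{\sigma^2}{a^2-1})$, $Z_i$ i.i.d. $\mathcal{N}(0,\sigma^2)$, $U_0=0$, $U_i=aU_{i-1}+Z_i$. Let $\theta>0$ solve $d=\frac1{2\pi}\int_{-\pi}^{\pi}\min(\theta,\sigma^2/g(w))dw$ with $g(w)=1+a^2-2a\cos w$, and let $d_n=\frac1n\sum_{i=1}^n\min(\theta,\sigma_{n,i}^2)$. Then there are positive constants $C_1,C_2$ such that for all $n\ge1$, $$\left|\frac1n\mathbb{E}[\jmath_{U_1^n}(U_1^n,d_n)]-\mathbb{R}_U(d)\right|\le\frac{C_1}n,\qquad \left|\frac1n\mathrm{Var}[\jmath_{U_1^n}(U_1^n,d_n)]-\mathbb{V}_U(d)\right|\le\frac{C_2}n,$$ where $\mathbb{R}_U(d)=\frac1{2\pi}\int_{-\pi}^{\pi}\frac12\log\max(g(w),\sigma^2/\theta)dw$ and $\mathbb{V}_U(d)=\frac1{4\pi}\int_{-\pi}^{\pi}\min[1,(\sigma^2/(\theta g(w)))^2]dw$.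
   Context: $\mathsf{F}$: $n\times n$ lower-triangular, ones on the diagonal, $-a$ on the first subdiagonal, zeros elsewhere; $\mu_{n,1}\le\cdots\le\mu_{n,n}$ eigenvalues of $\mathsf{F}'\mathsf{F}$; $\sigma_{n,i}^2=\sigma^2/\mu_{n,i}$; $\mathsf{S}$ orthogonal with $\mathsf{S}'(\mathsf{F}'\mathsf{F})^{-1}\mathsf{S}=\mathrm{diag}(1/\mu_{n,i})$, $x_1^n=\mathsf{S}'u_1^n$. For a distortion level $\delta$ with $n$-th order water level $\vartheta>0$ (i.e. $\delta=\frac1n\sum\min(\vartheta,\sigma_{n,i}^2)$), the $\mathsf{d}$-tilted information is $\jmath_{U_1^n}(u_1^n,\delta)=\sum_{i=1}^n\frac{\min(\vartheta,\sigma_{n,i}^2)}{2\vartheta}(\frac{x_i^2}{\sigma_{n,i}^2}-1)+\frac12\sum_{i=1}^n\log\frac{\max(\vartheta,\sigma_{n,i}^2)}{\vartheta}$. In particular the water level of $d_n$ is $\theta$. *)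

theory Defs
  imports "HOL-Probability.Probability" "Jordan_Normal_Form.Matrix"
begin

definition Fmat :: "real \<Rightarrow> nat \<Rightarrow> real mat" where
  "Fmat a n = mat n n (\<lambda>(i, j). if i = j then 1 else if i = Suc j then - a else 0)"

definition inv_of_mat :: "real mat \<Rightarrow> real mat" where
  "inv_of_mat A = (SOME B. B \<in> carrier_mat (dim_row A) (dim_row A) \<and> inverts_mat A B \<and> inverts_mat B A)"

fun AR :: "real \<Rightarrow> (nat \<Rightarrow> 'a \<Rightarrow> real) \<Rightarrow> nat \<Rightarrow> 'a \<Rightarrow> real" where
  "AR a Z 0 \<omega> = 0"
| "AR a Z (Suc i) \<omega> = a * AR a Z i \<omega> + Z (Suc i) \<omega>"

text \<open>d-tilted information with water level wl, given the coordinates x_i (i < n)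
  and the variances s_i = sigma_{n,i}^2.\<close>
definition jtilted :: "nat \<Rightarrow> (nat \<Rightarrow> real) \<Rightarrow> real \<Rightarrow> (nat \<Rightarrow> real) \<Rightarrow> real" where
  "jtilted n s wl x =
     (\<Sum>i<n. min wl (s i) / (2 * wl) * ((x i)\<^sup>2 / s i - 1))
     + 1/2 * (\<Sum>i<n. ln (max wl (s i) / wl))"

definition gfun :: "real \<Rightarrow> real \<Rightarrow> real" where
  "gfun a w = 1 + a\<^sup>2 - 2 * a * cos w"

end

theory Submission
  imports Defs "Jordan_Normal_Form.Determinant"
begin

(*
  Write G = F'F.  Its inverse is L L', where L = F^-1 is the lower triangular matrix of
  powers of a; hence U = L Z and the coordinates x = S'U are centred Gaussians with
  covariance diag(sigma^2 / mu_i).  The tilted information is an affine function of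
  sum_i c_i x_i^2, so by Isserlis' formula its mean and variance are sums sum_i h(mu_i),
  with h(t) = 1/2 log max(t, sigma^2/theta) for the mean (the terms log mu_i cancel because
  det F = 1) and h(t) = 1/2 min(1, (sigma^2/(theta t))^2) for the variance.

  For each root w of sin((n+1)w) = a sin(nw) the vector (sin((l+1)w))_l is an eigenvector
  of G with eigenvalue g(w), and there is such a root in every interval
  (k pi/n, (k+1) pi/n) with 1 <= k <= n-2.  So the sorted eigenvalues interlace the samples
  g(k pi/n), and sum_i h(mu_i) differs from a Riemann sum of the monotone function h o g by
  O(1), i.e. from (n / 2 pi) times the integral of h o g over [-pi, pi] by O(1).
*)

section \<open>Riemann sums of monotone functions\<close>

lemma integral_bounds_mono_on:
  fixes f :: "real \<Rightarrow> real"
  assumes mono: "mono_on {x..y} f" and cont: "continuous_on {x..y} f" and "x \<le> y"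
  shows "f x * (y - x) \<le> integral {x..y} f" "integral {x..y} f \<le> f y * (y - x)"
proof -
  have int: "f integrable_on {x..y}"
    by (rule integrable_continuous_interval[OF cont])
  have "integral {x..y} (\<lambda>_. f x) \<le> integral {x..y} f"
    by (rule integral_le[OF _ int]) (use assms in \<open>auto intro: mono_onD\<close>)
  then show "f x * (y - x) \<le> integral {x..y} f" using \<open>x \<le> y\<close> by (simp add: mult.commute)
  have "integral {x..y} f \<le> integral {x..y} (\<lambda>_. f y)"
    by (rule integral_le[OF int]) (use assms in \<open>auto intro: mono_onD\<close>)
  then show "integral {x..y} f \<le> f y * (y - x)" using \<open>x \<le> y\<close> by (simp add: mult.commute)
qed

lemma riemann_sums_bracket_integral:
  fixes f :: "real \<Rightarrow> real" and T :: real and n :: nat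
  assumes mono: "mono_on {0..T} f" and cont: "continuous_on {0..T} f"
    and "T \<ge> 0" and "n > 0"
  shows "(\<Sum>k<n. f (k * T / n)) * (T / n) \<le> integral {0..T} f"
    and "integral {0..T} f \<le> (\<Sum>k<n. f ((k + 1) * T / n)) * (T / n)"
proof -
  have npos: "real n > 0" using \<open>n > 0\<close> by simp
  have partial: "(\<Sum>k<m. f (k * T / n)) * (T / n) \<le> integral {0..m * T / n} f \<and>
      integral {0..m * T / n} f \<le> (\<Sum>k<m. f ((k + 1) * T / n)) * (T / n)" if "m \<le> n" for m :: nat
    using that
  proof (induction m)
    case (Suc m)
    define x y where "x = real m * T / n" and "y = real (m + 1) * T / n"
    have y: "real (Suc m) * T / n = y" by (simp add: y_def)
    have "(m + 1) * T \<le> n * T"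
      using Suc.prems \<open>T \<ge> 0\<close> by (intro mult_right_mono) auto
    then have xy: "0 \<le> x" "x \<le> y" "y \<le> T" "y - x = T / n"
      using npos \<open>T \<ge> 0\<close> by (auto simp: x_def y_def field_simps)
    have sub: "{x..y} \<subseteq> {0..T}" "{0..y} \<subseteq> {0..T}" using xy by auto
    have "integral {0..x} f + integral {x..y} f = integral {0..y} f"
      using xy by (intro Henstock_Kurzweil_Integration.integral_combine
          integrable_on_subinterval[OF integrable_continuous_interval[OF cont] sub(2)]) auto
    moreover have "f x * (T / n) \<le> integral {x..y} f" "integral {x..y} f \<le> f y * (T / n)"
      using integral_bounds_mono_on[OF mono_on_subset[OF mono sub(1)]
          continuous_on_subset[OF cont sub(1)] xy(2)] xy(4) by auto
    ultimately show ?case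
      using Suc.IH[OF Suc_leD[OF Suc.prems]]
      unfolding sum.lessThan_Suc distrib_right x_def[symmetric] y_def[symmetric] y by linarith
  qed simp
  from partial[of n] npos
  show "(\<Sum>k<n. f (k * T / n)) * (T / n) \<le> integral {0..T} f"
    and "integral {0..T} f \<le> (\<Sum>k<n. f ((k + 1) * T / n)) * (T / n)" by auto
qed

lemma node_in_interval:
  fixes T :: real and k n :: nat
  assumes "k \<le> n" "0 \<le> T"
  shows "real k * T / n \<in> {0..T}"
proof -
  have "real k * T \<le> real n * T" using assms by (intro mult_right_mono) auto
  then show ?thesis using assms by (cases "n = 0") (auto simp: divide_le_eq mult.commute)
qed

lemma gap_point_in_interval:
  fixes T w :: real and j n :: nat
  assumes "j + 2 < n" "0 \<le> T" "real (j + 1) * T / n < w" "w < real (j + 2) * T / n"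
  shows "w \<in> {0..T}"
proof -
  have "0 \<le> real (j + 1) * T / n" "real (j + 2) * T / n \<le> T"
    using node_in_interval[of "j + 2" n T] assms by auto
  then show ?thesis unfolding atLeastAtMost_iff using assms(3,4) by (intro conjI; linarith)
qed

lemma sum_interlaced_samples_bounds:
  fixes f :: "real \<Rightarrow> real" and q :: "nat \<Rightarrow> real" and T :: real and n :: nat
  assumes "T > 0" "n > 0"
    and f_bound: "\<And>x. x \<in> {0..T} \<Longrightarrow> \<bar>f x\<bar> \<le> B"
    and q_bound: "\<And>i. i < n \<Longrightarrow> \<bar>q i\<bar> \<le> B"
    and lower: "\<And>j. j + 2 < n \<Longrightarrow> f (real (j + 1) * T / n) \<le> q (j + 2)"
    and upper: "\<And>j. j + 2 < n \<Longrightarrow> q j \<le> f (real (j + 2) * T / n)"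
  shows "(\<Sum>k<n. f (real k * T / n)) - 4 * B \<le> (\<Sum>i<n. q i)
    \<and> (\<Sum>i<n. q i) \<le> (\<Sum>k<n. f (real (k + 1) * T / n)) + 4 * B"
proof -
  have node: "real k * T / n \<in> {0..T}" if "k \<le> n" for k
    by (rule node_in_interval[OF that]) (use \<open>T > 0\<close> in simp)
  show ?thesis
  proof (cases "n = 1")
    case True
    then show ?thesis using q_bound[of 0] f_bound node[of 0] node[of 1] by force
  next
    case False
    define m where "m = n - 2"
    have n: "n = m + 2" using \<open>n > 0\<close> False by (simp add: m_def)
    have split_front: "(\<Sum>i<m + 2. F i) = F 0 + F 1 + (\<Sum>j<m. F (j + 2))" for F :: "nat \<Rightarrow> real"
      by (simp add: numeral_2_eq_2 sum.lessThan_Suc_shift add.assoc del: sum.lessThan_Suc)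
    have split_back: "(\<Sum>i<m + 2. F i) = (\<Sum>j<m. F j) + F m + F (m + 1)" for F :: "nat \<Rightarrow> real"
      by (simp add: numeral_2_eq_2)
    have split_ends: "(\<Sum>i<m + 2. F i) = F 0 + (\<Sum>j<m. F (j + 1)) + F (m + 1)" for F :: "nat \<Rightarrow> real"
      unfolding numeral_2_eq_2 add_Suc_right add_0_right by (subst sum.lessThan_Suc_shift) simp
    have "(\<Sum>i<n. q i) = q 0 + q 1 + (\<Sum>j<m. q (j + 2))"
      unfolding n by (rule split_front)
    moreover have "(\<Sum>i<n. q i) = (\<Sum>j<m. q j) + q m + q (m + 1)"
      unfolding n by (rule split_back)
    moreover have "(\<Sum>k<n. f (real k * T / n))
        = f 0 + (\<Sum>j<m. f (real (j + 1) * T / n)) + f (real (m + 1) * T / n)"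
      "(\<Sum>k<n. f (real (k + 1) * T / n))
        = f (1 * T / n) + (\<Sum>j<m. f (real (j + 2) * T / n)) + f (real (m + 2) * T / n)"
      unfolding n split_ends by (simp_all add: add_ac)
    moreover have "(\<Sum>j<m. f (real (j + 1) * T / n)) \<le> (\<Sum>j<m. q (j + 2))"
      "(\<Sum>j<m. q j) \<le> (\<Sum>j<m. f (real (j + 2) * T / n))"
      using lower upper unfolding n by (auto intro!: sum_mono simp: add_ac)
    moreover have "\<bar>f 0\<bar> \<le> B" "\<bar>f (1 * T / n)\<bar> \<le> B" "\<bar>f (real (m + 1) * T / n)\<bar> \<le> B"
      "\<bar>f (real (m + 2) * T / n)\<bar> \<le> B"
      using f_bound node[of 0] node[of 1] node[of "m + 1"] node[of "m + 2"] n by auto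
    moreover have "\<bar>q 0\<bar> \<le> B" "\<bar>q 1\<bar> \<le> B" "\<bar>q m\<bar> \<le> B" "\<bar>q (m + 1)\<bar> \<le> B"
      using q_bound n by auto
    ultimately show ?thesis by linarith
  qed
qed

lemma interlaced_sum_approx_integral:
  fixes f :: "real \<Rightarrow> real" and q :: "nat \<Rightarrow> real" and T :: real and n :: nat
  assumes mono: "mono_on {0..T} f" and cont: "continuous_on {0..T} f" and "T > 0" "n > 0"
    and f_bound: "\<And>x. x \<in> {0..T} \<Longrightarrow> \<bar>f x\<bar> \<le> B"
    and q_bound: "\<And>i. i < n \<Longrightarrow> \<bar>q i\<bar> \<le> B"
    and lower: "\<And>j. j + 2 < n \<Longrightarrow> f (real (j + 1) * T / n) \<le> q (j + 2)"
    and upper: "\<And>j. j + 2 < n \<Longrightarrow> q j \<le> f (real (j + 2) * T / n)"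
  shows "\<bar>(\<Sum>i<n. q i) - n / T * integral {0..T} f\<bar> \<le> 6 * B"
proof -
  define lo where "lo = (\<Sum>k<n. f (real k * T / n))"
  define up where "up = (\<Sum>k<n. f (real (k + 1) * T / n))"
  have "real n > 0" using \<open>n > 0\<close> by simp
  have "lo \<le> n / T * integral {0..T} f" and "n / T * integral {0..T} f \<le> up"
    using riemann_sums_bracket_integral[OF mono cont _ \<open>n > 0\<close>] \<open>real n > 0\<close> \<open>T > 0\<close>
    by (auto simp: lo_def up_def field_simps)
  moreover have "up - lo = f T - f 0"
    unfolding up_def lo_def sum_subtractf[symmetric]
    using sum_lessThan_telescope[of "\<lambda>k. f (k * T / n)" n] \<open>real n > 0\<close> by (simp add: add.commute)
  moreover have "\<bar>f T\<bar> \<le> B" "\<bar>f 0\<bar> \<le> B" using f_bound \<open>T > 0\<close> by auto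
  moreover note sum_interlaced_samples_bounds[OF \<open>T > 0\<close> \<open>n > 0\<close> f_bound q_bound lower upper]
  ultimately show ?thesis unfolding lo_def up_def by linarith
qed

lemma integral_even_symmetric:
  fixes f :: "real \<Rightarrow> real"
  assumes "continuous_on {-T..T} f" and "\<And>x. f (- x) = f x" and "T \<ge> 0"
  shows "integral {-T..T} f = 2 * integral {0..T} f"
proof -
  have "integral {-T..0} f + integral {0..T} f = integral {-T..T} f"
    using assms by (intro Henstock_Kurzweil_Integration.integral_combine integrable_continuous_interval) auto
  moreover have "integral {-T..-0} (\<lambda>x. f (- x)) = integral {0..T} f"
    by (rule Henstock_Kurzweil_Integration.integral_reflect_real)
  ultimately show ?thesis using assms(2) by simp
qed

section \<open>Quadratic forms in centred Gaussian variables\<close>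

lemma jtilted_eq_quadratic:
  "jtilted n s wl x = (\<Sum>i<n. min wl (s i) / (2 * wl * s i) * (x i)\<^sup>2)
     + (\<Sum>i<n. 1/2 * ln (max wl (s i) / wl) - min wl (s i) / (2 * wl))"
  unfolding jtilted_def by (simp add: sum_subtractf sum.distrib sum_distrib_left algebra_simps)

lemma sum_pairings_products:
  fixes A :: "nat \<Rightarrow> nat \<Rightarrow> real"
  assumes "finite K"
  shows "(\<Sum>k\<in>K. \<Sum>l\<in>K. \<Sum>m\<in>K. \<Sum>p\<in>K. A k l * A m p *
      (of_bool (k = l \<and> m = p) + of_bool (k = m \<and> l = p) + of_bool (k = p \<and> l = m)))
    = (\<Sum>k\<in>K. A k k)\<^sup>2 + (\<Sum>k\<in>K. \<Sum>l\<in>K. A k l * (A k l + A l k))"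
proof -
  have pair: "(\<Sum>m\<in>K. \<Sum>p\<in>K. F m p * of_bool (k = m \<and> l = p)) = F k l"
    if "k \<in> K" "l \<in> K" for k l and F :: "nat \<Rightarrow> nat \<Rightarrow> real"
  proof -
    have "(\<Sum>p\<in>K. F m p * of_bool (k = m \<and> l = p)) = (if k = m then F m l else 0)" for m
      using assms that by (cases "k = m") (simp_all add: of_bool_def if_distrib sum.delta cong: if_cong)
    then show ?thesis using assms that by (simp add: sum.delta)
  qed
  have "(\<Sum>m\<in>K. \<Sum>p\<in>K. A k l * A m p * of_bool (k = l \<and> m = p))
      = (if k = l then A k k * (\<Sum>m\<in>K. A m m) else 0)" for k l
    using assms by (cases "k = l")
      (simp_all add: of_bool_def if_distrib sum.delta' sum_distrib_left cong: if_cong)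
  then have first: "(\<Sum>k\<in>K. \<Sum>l\<in>K. \<Sum>m\<in>K. \<Sum>p\<in>K. A k l * A m p * of_bool (k = l \<and> m = p))
      = (\<Sum>k\<in>K. A k k)\<^sup>2"
    using assms by (simp add: sum.delta' power2_eq_square sum_distrib_right cong: if_cong)
  have second: "(\<Sum>k\<in>K. \<Sum>l\<in>K. \<Sum>m\<in>K. \<Sum>p\<in>K. A k l * A m p * of_bool (k = m \<and> l = p))
      = (\<Sum>k\<in>K. \<Sum>l\<in>K. A k l * A k l)"
    using pair[of _ _ "\<lambda>m p. A _ _ * A m p"] by (intro sum.cong refl) simp
  have third: "(\<Sum>k\<in>K. \<Sum>l\<in>K. \<Sum>m\<in>K. \<Sum>p\<in>K. A k l * A m p * of_bool (l = m \<and> k = p))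
      = (\<Sum>k\<in>K. \<Sum>l\<in>K. A k l * A l k)"
    using pair[of _ _ "\<lambda>m p. A _ _ * A m p"] by (intro sum.cong refl) simp
  have "(\<Sum>k\<in>K. \<Sum>l\<in>K. \<Sum>m\<in>K. \<Sum>p\<in>K. A k l * A m p *
      (of_bool (k = l \<and> m = p) + of_bool (k = m \<and> l = p) + of_bool (k = p \<and> l = m)))
    = (\<Sum>k\<in>K. \<Sum>l\<in>K. \<Sum>m\<in>K. \<Sum>p\<in>K. A k l * A m p * of_bool (k = l \<and> m = p))
      + (\<Sum>k\<in>K. \<Sum>l\<in>K. \<Sum>m\<in>K. \<Sum>p\<in>K. A k l * A m p * of_bool (k = m \<and> l = p))
      + (\<Sum>k\<in>K. \<Sum>l\<in>K. \<Sum>m\<in>K. \<Sum>p\<in>K. A k l * A m p * of_bool (l = m \<and> k = p))"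
    by (simp only: sum.distrib[symmetric] distrib_left mult_ac conj_commute)
  then show ?thesis unfolding first second third by (simp add: distrib_left sum.distrib)
qed

locale centered_gaussian_family = prob_space M for M :: "'a measure" +
  fixes Y :: "nat \<Rightarrow> 'a \<Rightarrow> real" and I :: "nat set" and \<sigma> :: real
  assumes indep: "indep_vars (\<lambda>_. borel) Y I"
    and normal: "\<And>i. i \<in> I \<Longrightarrow> distributed M lborel (Y i) (normal_density 0 \<sigma>)"
    and \<sigma>_pos: "0 < \<sigma>"
begin

\<comment> \<open>the moments of N(0, \<sigma>^2) of order at most 4\<close>
definition moment :: "nat \<Rightarrow> real" where
  "moment k = (if k = 0 then 1 else if k = 2 then \<sigma>^2 else if k = 4 then 3 * \<sigma>^4 else 0)"

lemma integrable_power: "i \<in> I \<Longrightarrow> integrable M (\<lambda>\<omega>. Y i \<omega> ^ k)"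
  using distributed_integrable[OF normal, of i "\<lambda>x. x ^ k"]
    integrable_normal_moment[OF \<sigma>_pos, of 0 k] by simp

lemma expectation_power: "i \<in> I \<Longrightarrow> k \<le> 4 \<Longrightarrow> expectation (\<lambda>\<omega>. Y i \<omega> ^ k) = moment k"
proof -
  assume "i \<in> I" "k \<le> 4"
  have "expectation (\<lambda>\<omega>. Y i \<omega> ^ k) = (\<integral>x. normal_density 0 \<sigma> x * x ^ k \<partial>lborel)"
    using distributed_integral[OF normal[OF \<open>i \<in> I\<close>], of "\<lambda>x. x ^ k"] by simp
  moreover have "k \<in> {0, 1, 2, 3, 4}" using \<open>k \<le> 4\<close> by auto
  ultimately show ?thesis
    using integral_normal_moment_even[OF \<sigma>_pos, of 0 1] integral_normal_moment_even[OF \<sigma>_pos, of 0 2]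
      integral_normal_moment_odd[OF \<sigma>_pos, of 0 0] integral_normal_moment_odd[OF \<sigma>_pos, of 0 1]
      prob_space \<sigma>_pos
    by (auto simp: moment_def fact_numeral field_simps power2_eq_square eval_nat_numeral)
qed

lemma expectation_prod_powers:
  assumes "finite J" "J \<subseteq> I" and "\<And>i. i \<in> J \<Longrightarrow> e i \<le> 4"
  shows "integrable M (\<lambda>\<omega>. \<Prod>i\<in>J. Y i \<omega> ^ e i)"
    and "expectation (\<lambda>\<omega>. \<Prod>i\<in>J. Y i \<omega> ^ e i) = (\<Prod>i\<in>J. moment (e i))"
proof -
  have indep_powers: "indep_vars (\<lambda>_. borel) (\<lambda>i \<omega>. Y i \<omega> ^ e i) J"
    using indep_vars_compose2[OF indep_vars_subset[OF indep \<open>J \<subseteq> I\<close>], of "\<lambda>i x. x ^ e i"]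
    by auto
  have integrable: "\<And>i. i \<in> J \<Longrightarrow> integrable M (\<lambda>\<omega>. Y i \<omega> ^ e i)"
    using integrable_power assms by auto
  show "integrable M (\<lambda>\<omega>. \<Prod>i\<in>J. Y i \<omega> ^ e i)"
    by (rule indep_vars_integrable[OF \<open>finite J\<close> indep_powers integrable])
  have "expectation (\<lambda>\<omega>. \<Prod>i\<in>J. Y i \<omega> ^ e i) = (\<Prod>i\<in>J. expectation (\<lambda>\<omega>. Y i \<omega> ^ e i))"
    by (rule indep_vars_lebesgue_integral[OF \<open>finite J\<close> indep_powers integrable])
  also have "\<dots> = (\<Prod>i\<in>J. moment (e i))"
    using expectation_power assms by (intro prod.cong) auto
  finally show "expectation (\<lambda>\<omega>. \<Prod>i\<in>J. Y i \<omega> ^ e i) = (\<Prod>i\<in>J. moment (e i))" .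
qed

lemma second_moment:
  assumes "k \<in> I" "l \<in> I"
  shows "integrable M (\<lambda>\<omega>. Y k \<omega> * Y l \<omega>)"
    and "expectation (\<lambda>\<omega>. Y k \<omega> * Y l \<omega>) = \<sigma>^2 * of_bool (k = l)"
proof -
  define e where "e i = of_bool (i = k) + (of_bool (i = l) :: nat)" for i
  have "Y k \<omega> * Y l \<omega> = (\<Prod>i\<in>{k, l}. Y i \<omega> ^ e i)" for \<omega>
    unfolding e_def by (cases "k = l") (simp_all add: power2_eq_square)
  moreover note expectation_prod_powers[of "{k, l}" e]
  ultimately show "integrable M (\<lambda>\<omega>. Y k \<omega> * Y l \<omega>)"
    "expectation (\<lambda>\<omega>. Y k \<omega> * Y l \<omega>) = \<sigma>^2 * of_bool (k = l)"
    using assms by (auto simp: e_def moment_def)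
qed

lemma fourth_moment:
  assumes "k \<in> I" "l \<in> I" "m \<in> I" "p \<in> I"
  shows "integrable M (\<lambda>\<omega>. Y k \<omega> * Y l \<omega> * Y m \<omega> * Y p \<omega>)"
    and "expectation (\<lambda>\<omega>. Y k \<omega> * Y l \<omega> * Y m \<omega> * Y p \<omega>) =
      \<sigma>^4 * (of_bool (k = l \<and> m = p) + of_bool (k = m \<and> l = p) + of_bool (k = p \<and> l = m))"
proof -
  define e where "e i = of_bool (i = k) + of_bool (i = l) + of_bool (i = m) + (of_bool (i = p) :: nat)" for i
  have prod: "Y k \<omega> * Y l \<omega> * Y m \<omega> * Y p \<omega> = (\<Prod>i\<in>{k, l, m, p}. Y i \<omega> ^ e i)" for \<omega>
    unfolding e_def
    by (cases "k = l"; cases "k = m"; cases "k = p"; cases "l = m"; cases "l = p"; cases "m = p")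
       (simp_all add: power2_eq_square power3_eq_cube power4_eq_xxxx insert_commute)
  have "(\<Prod>i\<in>{k, l, m, p}. moment (e i)) =
      \<sigma>^4 * (of_bool (k = l \<and> m = p) + of_bool (k = m \<and> l = p) + of_bool (k = p \<and> l = m))"
    unfolding e_def
    by (cases "k = l"; cases "k = m"; cases "k = p"; cases "l = m"; cases "l = p"; cases "m = p")
       (simp_all add: moment_def insert_commute power2_eq_square power4_eq_xxxx)
  moreover have "finite {k, l, m, p}" "{k, l, m, p} \<subseteq> I" "\<And>i. e i \<le> 4"
    using assms by (auto simp: e_def)
  ultimately show "integrable M (\<lambda>\<omega>. Y k \<omega> * Y l \<omega> * Y m \<omega> * Y p \<omega>)"
    "expectation (\<lambda>\<omega>. Y k \<omega> * Y l \<omega> * Y m \<omega> * Y p \<omega>) =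
      \<sigma>^4 * (of_bool (k = l \<and> m = p) + of_bool (k = m \<and> l = p) + of_bool (k = p \<and> l = m))"
    unfolding prod using expectation_prod_powers[of "{k, l, m, p}" e] by auto
qed

lemma quadratic_form_moments:
  fixes A :: "nat \<Rightarrow> nat \<Rightarrow> real"
  assumes K: "finite K" "K \<subseteq> I"
  defines "Q \<equiv> \<lambda>\<omega>. \<Sum>k\<in>K. \<Sum>l\<in>K. A k l * Y k \<omega> * Y l \<omega>"
  shows "integrable M Q" and "integrable M (\<lambda>\<omega>. (Q \<omega>)\<^sup>2)"
    and "expectation Q = \<sigma>^2 * (\<Sum>k\<in>K. A k k)"
    and "variance Q = \<sigma>^4 * (\<Sum>k\<in>K. \<Sum>l\<in>K. A k l * (A k l + A l k))"
proof -
  have int2: "integrable M (\<lambda>\<omega>. A k l * Y k \<omega> * Y l \<omega>)" if "k \<in> K" "l \<in> K" for k l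
    using second_moment(1)[of k l] that K by (auto simp: mult.assoc)
  show int_Q: "integrable M Q" unfolding Q_def by (intro Bochner_Integration.integrable_sum int2)
  have "expectation Q = (\<Sum>k\<in>K. \<Sum>l\<in>K. A k l * (\<sigma>^2 * of_bool (k = l)))"
    unfolding Q_def using int2 K second_moment(2)
    by (simp add: Bochner_Integration.integral_sum integrable_sum mult.assoc subset_iff)
  also have "\<dots> = \<sigma>^2 * (\<Sum>k\<in>K. A k k)"
    using K(1) by (simp add: sum_distrib_left of_bool_def if_distrib sum.delta' mult.commute cong: if_cong)
  finally show EQ: "expectation Q = \<sigma>^2 * (\<Sum>k\<in>K. A k k)" .
  define P where "P k l m p = (\<lambda>\<omega>. A k l * A m p * (Y k \<omega> * Y l \<omega> * Y m \<omega> * Y p \<omega>))" for k l m p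
  have square: "(Q \<omega>)\<^sup>2 = (\<Sum>k\<in>K. \<Sum>l\<in>K. \<Sum>m\<in>K. \<Sum>p\<in>K. P k l m p \<omega>)" for \<omega>
    unfolding Q_def P_def power2_eq_square sum_distrib_right sum_distrib_left by (simp add: mult_ac)
  have int4: "integrable M (P k l m p)" if "k \<in> K" "l \<in> K" "m \<in> K" "p \<in> K" for k l m p
    unfolding P_def using that K by (intro integrable_mult_right fourth_moment(1)) auto
  show int_Q2: "integrable M (\<lambda>\<omega>. (Q \<omega>)\<^sup>2)"
    unfolding square by (intro Bochner_Integration.integrable_sum int4)
  have "expectation (\<lambda>\<omega>. (Q \<omega>)\<^sup>2) = (\<Sum>k\<in>K. \<Sum>l\<in>K. \<Sum>m\<in>K. \<Sum>p\<in>K. A k l * A m p *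
      (\<sigma>^4 * (of_bool (k = l \<and> m = p) + of_bool (k = m \<and> l = p) + of_bool (k = p \<and> l = m))))"
    unfolding square using int4 K
    by (simp add: Bochner_Integration.integral_sum integrable_sum P_def fourth_moment(2) subset_iff)
  also have "\<dots> = \<sigma>^4 * (\<Sum>k\<in>K. \<Sum>l\<in>K. \<Sum>m\<in>K. \<Sum>p\<in>K. A k l * A m p *
      (of_bool (k = l \<and> m = p) + of_bool (k = m \<and> l = p) + of_bool (k = p \<and> l = m)))"
    by (simp add: sum_distrib_left mult_ac)
  also have "\<dots> = \<sigma>^4 * ((\<Sum>k\<in>K. A k k)\<^sup>2 + (\<Sum>k\<in>K. \<Sum>l\<in>K. A k l * (A k l + A l k)))"
    by (simp only: sum_pairings_products[OF K(1)])
  finally show "variance Q = \<sigma>^4 * (\<Sum>k\<in>K. \<Sum>l\<in>K. A k l * (A k l + A l k))"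
    using variance_eq[OF int_Q int_Q2] EQ by (simp add: power2_eq_square power4_eq_xxxx algebra_simps)
qed

lemma weighted_squares_moments:
  fixes b :: "nat \<Rightarrow> nat \<Rightarrow> real" and c g :: "nat \<Rightarrow> real"
  assumes K: "finite K" "K \<subseteq> I"
    and orth: "\<And>i j. i < n \<Longrightarrow> j < n \<Longrightarrow> (\<Sum>m\<in>K. b i m * b j m) = (if i = j then g i else 0)"
  defines "Q \<equiv> \<lambda>\<omega>. \<Sum>i<n. c i * (\<Sum>m\<in>K. b i m * Y m \<omega>)\<^sup>2"
  shows "integrable M Q" and "integrable M (\<lambda>\<omega>. (Q \<omega>)\<^sup>2)"
    and "expectation Q = \<sigma>^2 * (\<Sum>i<n. c i * g i)"
    and "variance Q = 2 * \<sigma>^4 * (\<Sum>i<n. (c i)\<^sup>2 * (g i)\<^sup>2)"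
proof -
  define A where "A m m' = (\<Sum>i<n. c i * b i m * b i m')" for m m'
  have Q_eq: "Q = (\<lambda>\<omega>. \<Sum>m\<in>K. \<Sum>m'\<in>K. A m m' * Y m \<omega> * Y m' \<omega>)"
  proof
    fix \<omega>
    have "Q \<omega> = (\<Sum>i<n. \<Sum>m\<in>K. \<Sum>m'\<in>K. c i * b i m * b i m' * Y m \<omega> * Y m' \<omega>)"
      unfolding Q_def power2_eq_square sum_product
      by (intro sum.cong refl) (simp add: sum_distrib_left mult_ac)
    also have "\<dots> = (\<Sum>m\<in>K. \<Sum>m'\<in>K. \<Sum>i<n. c i * b i m * b i m' * Y m \<omega> * Y m' \<omega>)"
      by (subst sum.swap) (simp add: sum.swap[of _ "{..<n}"])
    finally show "Q \<omega> = (\<Sum>m\<in>K. \<Sum>m'\<in>K. A m m' * Y m \<omega> * Y m' \<omega>)"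
      unfolding A_def by (simp add: sum_distrib_right)
  qed
  note moments = quadratic_form_moments[OF K, of A]
  show "integrable M Q" "integrable M (\<lambda>\<omega>. (Q \<omega>)\<^sup>2)"
    unfolding Q_eq by (fact moments(1), fact moments(2))
  have "(\<Sum>m\<in>K. A m m) = (\<Sum>i<n. c i * (\<Sum>m\<in>K. b i m * b i m))"
    unfolding A_def by (subst sum.swap) (simp add: sum_distrib_left mult.assoc)
  then show "expectation Q = \<sigma>^2 * (\<Sum>i<n. c i * g i)"
    unfolding Q_eq moments(3) using orth by simp
  have "(\<Sum>m\<in>K. \<Sum>m'\<in>K. A m m' * A m m')
      = (\<Sum>m\<in>K. \<Sum>m'\<in>K. \<Sum>i<n. \<Sum>j<n. c i * c j * (b i m * b j m) * (b i m' * b j m'))"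
    unfolding A_def sum_product by (intro sum.cong refl) (simp add: mult_ac)
  also have "\<dots> = (\<Sum>i<n. \<Sum>j<n. \<Sum>m\<in>K. \<Sum>m'\<in>K. c i * c j * (b i m * b j m) * (b i m' * b j m'))"
    by (simp only: sum.swap[of _ K "{..<n}"])
  also have "\<dots> = (\<Sum>i<n. \<Sum>j<n. c i * c j * (\<Sum>m\<in>K. b i m * b j m) * (\<Sum>m'\<in>K. b i m' * b j m'))"
    by (simp add: sum_product sum_distrib_left mult_ac)
  also have "\<dots> = (\<Sum>i<n. (c i)\<^sup>2 * (g i)\<^sup>2)"
  proof -
    have "(\<Sum>j<n. c i * c j * (\<Sum>m\<in>K. b i m * b j m) * (\<Sum>m'\<in>K. b i m' * b j m'))
        = (\<Sum>j<n. if i = j then c i * c j * g i * g i else 0)" if "i < n" for i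
      using that orth by (intro sum.cong) auto
    then show ?thesis by (simp add: power2_eq_square mult_ac)
  qed
  moreover have "(\<Sum>m\<in>K. \<Sum>m'\<in>K. A m m' * (A m m' + A m' m)) = 2 * (\<Sum>m\<in>K. \<Sum>m'\<in>K. A m m' * A m m')"
    unfolding sum_distrib_left by (intro sum.cong refl) (simp add: A_def mult_ac)
  ultimately show "variance Q = 2 * \<sigma>^4 * (\<Sum>i<n. (c i)\<^sup>2 * (g i)\<^sup>2)"
    unfolding Q_eq moments(4) by simp
qed

lemma jtilted_moments:
  fixes b :: "nat \<Rightarrow> nat \<Rightarrow> real" and v :: "nat \<Rightarrow> real"
  assumes K: "finite K" "K \<subseteq> I" and "0 < \<theta>" and v_pos: "\<And>i. i < n \<Longrightarrow> 0 < v i"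
    and cov: "\<And>i j. i < n \<Longrightarrow> j < n \<Longrightarrow>
      \<sigma>\<^sup>2 * (\<Sum>m\<in>K. b i m * b j m) = (if i = j then v i else 0)"
  defines "J \<equiv> \<lambda>\<omega>. jtilted n v \<theta> (\<lambda>i. \<Sum>m\<in>K. b i m * Y m \<omega>)"
  shows "expectation J = 1/2 * (\<Sum>i<n. ln (max \<theta> (v i) / \<theta>))"
    and "variance J = 1/2 * (\<Sum>i<n. (min 1 (v i / \<theta>))\<^sup>2)"
proof -
  define c where "c i = min \<theta> (v i) / (2 * \<theta> * v i)" for i
  define C where "C = (\<Sum>i<n. 1/2 * ln (max \<theta> (v i) / \<theta>) - min \<theta> (v i) / (2 * \<theta>))"
  define Q where "Q = (\<lambda>\<omega>. \<Sum>i<n. c i * (\<Sum>m\<in>K. b i m * Y m \<omega>)\<^sup>2)"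
  have J_eq: "J = (\<lambda>\<omega>. Q \<omega> + C)"
    unfolding J_def Q_def C_def c_def jtilted_eq_quadratic ..
  have "(\<Sum>m\<in>K. b i m * b j m) = (if i = j then v i / \<sigma>\<^sup>2 else 0)" if "i < n" "j < n" for i j
    using cov[OF that] \<sigma>_pos by (auto simp: field_simps)
  note moments = weighted_squares_moments[OF K this, where c = c]
  have weight: "\<sigma>\<^sup>2 * (c i * (v i / \<sigma>\<^sup>2)) = min \<theta> (v i) / (2 * \<theta>)" if "i < n" for i
    using v_pos[OF that] \<sigma>_pos by (simp add: c_def field_simps)
  have "expectation Q = \<sigma>\<^sup>2 * (\<Sum>i<n. c i * (v i / \<sigma>\<^sup>2))"
    unfolding Q_def by (rule moments(3))
  also have "\<dots> = (\<Sum>i<n. min \<theta> (v i) / (2 * \<theta>))"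
    unfolding sum_distrib_left using weight by (auto intro: sum.cong)
  finally have EQ: "expectation Q = (\<Sum>i<n. min \<theta> (v i) / (2 * \<theta>))" .
  have EJ: "expectation J = expectation Q + C"
    unfolding J_eq using moments(1) by (simp add: Q_def prob_space)
  then show "expectation J = 1/2 * (\<Sum>i<n. ln (max \<theta> (v i) / \<theta>))"
    unfolding EQ C_def by (simp add: sum_subtractf sum_distrib_left)
  have "variance J = variance Q"
    unfolding EJ by (simp add: J_eq)
  also have "\<dots> = 2 * \<sigma>^4 * (\<Sum>i<n. (c i)\<^sup>2 * (v i / \<sigma>\<^sup>2)\<^sup>2)"
    unfolding Q_def by (rule moments(4))
  also have "\<dots> = (\<Sum>i<n. 2 * (min \<theta> (v i) / (2 * \<theta>))\<^sup>2)"
  proof -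
    have "2 * \<sigma>^4 * ((c i)\<^sup>2 * (v i / \<sigma>\<^sup>2)\<^sup>2) = 2 * (min \<theta> (v i) / (2 * \<theta>))\<^sup>2" if "i < n" for i
      unfolding weight[OF that, symmetric] using \<sigma>_pos by (simp add: field_simps power2_eq_square power4_eq_xxxx)
    then show ?thesis unfolding sum_distrib_left by (auto intro: sum.cong)
  qed
  also have "\<dots> = 1/2 * (\<Sum>i<n. (min 1 (v i / \<theta>))\<^sup>2)"
  proof -
    have "min \<theta> (v i) / (2 * \<theta>) = min 1 (v i / \<theta>) / 2" for i
      using \<open>0 < \<theta>\<close> by (auto simp: min_def field_simps)
    then show ?thesis unfolding sum_distrib_left by (simp only:) (simp add: power_divide)
  qed
  finally show "variance J = 1/2 * (\<Sum>i<n. (min 1 (v i / \<theta>))\<^sup>2)" .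
qed

end

section \<open>The matrix F and the symbol g\<close>

lemma gfun_strict_mono:
  "0 < a \<Longrightarrow> 0 \<le> x \<Longrightarrow> x < y \<Longrightarrow> y \<le> pi \<Longrightarrow> gfun a x < gfun a y"
  unfolding gfun_def using cos_monotone_0_pi[of x y] by (simp add: mult_strict_left_mono)

lemma gfun_mono_on: "0 < a \<Longrightarrow> mono_on {0..pi} (gfun a)"
  by (rule mono_onI) (metis atLeastAtMost_iff gfun_strict_mono order_le_less)

lemma gfun_bounds: "0 \<le> a \<Longrightarrow> (a - 1)\<^sup>2 \<le> gfun a w \<and> gfun a w \<le> (1 + a)\<^sup>2"
proof -
  assume "0 \<le> a"
  then have "- a \<le> a * cos w" "a * cos w \<le> a"
    using mult_left_mono[of "cos w" 1 a] mult_left_mono[of "-1" "cos w" a] by auto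
  then show ?thesis unfolding gfun_def by (simp add: power2_eq_square algebra_simps)
qed

lemma gfun_pos: "0 \<le> a \<Longrightarrow> a \<noteq> 1 \<Longrightarrow> 0 < gfun a w"
  using gfun_bounds[of a w] by (metis less_le_trans right_minus_eq zero_less_power2)

lemma gfun_minus [simp]: "gfun a (- w) = gfun a w"
  by (simp add: gfun_def)

lemma continuous_on_gfun [continuous_intros]: "continuous_on A (gfun a)"
  unfolding gfun_def by (intro continuous_intros)

lemma secular_equation_root:
  fixes n k :: nat
  assumes "1 \<le> k" "k + 1 < n"
  shows "\<exists>w. real k * pi / n < w \<and> w < real (k + 1) * pi / n \<and> sin ((real n + 1) * w) = a * sin (real n * w)"
proof -
  define \<phi> where "\<phi> w = sin ((real n + 1) * w) - a * sin (real n * w)" for w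
  have \<phi>_node: "\<phi> (real j * pi / n) = (-1) ^ j * sin (real j * pi / n)" for j :: nat
  proof -
    have "(real n + 1) * (real j * pi / n) = real j * pi + real j * pi / n"
      "real n * (real j * pi / n) = real j * pi"
      using assms by (auto simp: field_simps)
    then show ?thesis unfolding \<phi>_def by (simp add: sin_add sin_npi cos_npi)
  qed
  define x y where "x = real k * pi / n" and "y = real (k + 1) * pi / n"
  have "real (k + 1) * pi < real n * pi" using assms by (intro mult_strict_right_mono) auto
  then have "0 < x" "x < y" "y < pi"
    using assms by (auto simp: x_def y_def field_simps)
  then have sin_pos: "sin x > 0" "sin y > 0" by (auto intro!: sin_gt_zero)
  have \<phi>_x: "\<phi> x = (-1) ^ k * sin x" and \<phi>_y: "\<phi> y = - ((-1) ^ k * sin y)"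
    using \<phi>_node[of k] \<phi>_node[of "k + 1"] by (simp_all add: x_def y_def)
  have cont: "continuous_on {x..y} \<phi>" unfolding \<phi>_def by (intro continuous_intros)
  have "\<exists>w\<ge>x. w \<le> y \<and> \<phi> w = 0"
  proof (cases "even k")
    case True
    then show ?thesis
      using IVT2'[of \<phi> y 0 x, OF _ _ _ cont] \<open>x < y\<close> \<phi>_x \<phi>_y sin_pos by auto
  next
    case False
    then show ?thesis
      using IVT'[of \<phi> x 0 y, OF _ _ _ cont] \<open>x < y\<close> \<phi>_x \<phi>_y sin_pos by auto
  qed
  then obtain w where "x \<le> w" "w \<le> y" "\<phi> w = 0" by blast
  moreover have "\<phi> x \<noteq> 0" "\<phi> y \<noteq> 0" using \<phi>_x \<phi>_y sin_pos by auto
  ultimately have "x < w" "w < y" "\<phi> w = 0" by (auto simp: order_le_less)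
  then show ?thesis unfolding x_def y_def \<phi>_def by auto
qed

lemma Fmat_carrier [simp]: "Fmat a n \<in> carrier_mat n n"
  and Fmat_dim [simp]: "dim_row (Fmat a n) = n" "dim_col (Fmat a n) = n"
  unfolding Fmat_def by simp_all

lemma Fmat_index:
  "i < n \<Longrightarrow> j < n \<Longrightarrow> Fmat a n $$ (i, j) = (if i = j then 1 else if i = Suc j then - a else 0)"
  unfolding Fmat_def by simp

lemma sum_Fmat_row:
  "i < n \<Longrightarrow> (\<Sum>k<n. Fmat a n $$ (i, k) * x k) = x i - (if 0 < i then a * x (i - 1) else 0)"
proof -
  assume "i < n"
  have "(\<Sum>k<n. Fmat a n $$ (i, k) * x k)
      = (\<Sum>k<n. if k = i then x k else 0) - a * (\<Sum>k<n. if Suc k = i then x k else 0)"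
    unfolding sum_distrib_left sum_subtractf[symmetric]
    using \<open>i < n\<close> by (intro sum.cong) (auto simp: Fmat_index)
  also have "(\<Sum>k<n. if Suc k = i then x k else 0) = (if 0 < i then x (i - 1) else 0)"
    using \<open>i < n\<close> by (cases i) (simp_all add: sum.delta')
  finally show ?thesis using \<open>i < n\<close> by simp
qed

lemma sum_Fmat_col:
  "j < n \<Longrightarrow> (\<Sum>i<n. Fmat a n $$ (i, j) * u i) = u j - (if Suc j < n then a * u (Suc j) else 0)"
proof -
  assume "j < n"
  have "(\<Sum>i<n. Fmat a n $$ (i, j) * u i)
      = (\<Sum>i<n. if i = j then u i else 0) - a * (\<Sum>i<n. if i = Suc j then u i else 0)"
    unfolding sum_distrib_left sum_subtractf[symmetric]
    using \<open>j < n\<close> by (intro sum.cong) (auto simp: Fmat_index)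
  then show ?thesis using \<open>j < n\<close> by (simp add: sum.delta')
qed

lemma Fmat_mult_vec_index:
  "v \<in> carrier_vec n \<Longrightarrow> i < n \<Longrightarrow>
    (Fmat a n *\<^sub>v v) $ i = v $ i - (if 0 < i then a * v $ (i - 1) else 0)"
  using sum_Fmat_row[of i n a "\<lambda>k. v $ k"]
  by (auto simp: scalar_prod_def atLeast0LessThan intro!: sum.cong)

lemma transpose_Fmat_mult_vec_index:
  "u \<in> carrier_vec n \<Longrightarrow> j < n \<Longrightarrow>
    ((Fmat a n)\<^sup>T *\<^sub>v u) $ j = u $ j - (if Suc j < n then a * u $ Suc j else 0)"
  using sum_Fmat_col[of j n a "\<lambda>k. u $ k"]
  by (auto simp: scalar_prod_def atLeast0LessThan intro!: sum.cong)

lemma det_Fmat: "det (Fmat a n) = 1"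
proof -
  have "det (Fmat a n) = prod_list (diag_mat (Fmat a n))"
    by (rule det_lower_triangular[of n]) (auto simp: Fmat_index)
  also have "\<dots> = 1" by (simp add: prod_list_diag_prod Fmat_def)
  finally show ?thesis .
qed

definition Lmat :: "real \<Rightarrow> nat \<Rightarrow> real mat" where
  "Lmat a n = mat n n (\<lambda>(k, m). if m \<le> k then a ^ (k - m) else 0)"

lemma Lmat_carrier [simp]: "Lmat a n \<in> carrier_mat n n"
  and Lmat_dim [simp]: "dim_row (Lmat a n) = n" "dim_col (Lmat a n) = n"
  unfolding Lmat_def by simp_all

lemma Fmat_mult_Lmat: "Fmat a n * Lmat a n = 1\<^sub>m n"
proof (rule eq_matI)
  fix i j assume "i < dim_row (1\<^sub>m n :: real mat)" "j < dim_col (1\<^sub>m n :: real mat)"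
  then have "i < n" "j < n" by auto
  have "(Fmat a n * Lmat a n) $$ (i, j) = (\<Sum>k<n. Fmat a n $$ (i, k) * (if j \<le> k then a ^ (k - j) else 0))"
    using \<open>i < n\<close> \<open>j < n\<close> by (auto simp: scalar_prod_def atLeast0LessThan Lmat_def intro!: sum.cong)
  also have "\<dots> = (if j \<le> i then a ^ (i - j) else 0)
      - (if 0 < i then a * (if j \<le> i - 1 then a ^ (i - 1 - j) else 0) else 0)"
    by (rule sum_Fmat_row[OF \<open>i < n\<close>])
  also have "\<dots> = (if i = j then 1 else 0)"
    by (cases "j < i") (auto simp: Suc_diff_Suc simp flip: power_Suc)
  finally show "(Fmat a n * Lmat a n) $$ (i, j) = 1\<^sub>m n $$ (i, j)" using \<open>i < n\<close> \<open>j < n\<close> by simp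
qed auto

lemma Lmat_mult_Fmat: "Lmat a n * Fmat a n = 1\<^sub>m n"
  by (rule mat_mult_left_right_inverse[OF Fmat_carrier Lmat_carrier Fmat_mult_Lmat])

lemma inv_of_mat_eqI:
  assumes "A \<in> carrier_mat n n" "B \<in> carrier_mat n n" "A * B = 1\<^sub>m n"
  shows "inv_of_mat A = B"
  unfolding inv_of_mat_def
proof (rule some_equality)
  show "B \<in> carrier_mat (dim_row A) (dim_row A) \<and> inverts_mat A B \<and> inverts_mat B A"
    using assms mat_mult_left_right_inverse[OF assms] by (auto simp: inverts_mat_def)
  fix X assume "X \<in> carrier_mat (dim_row A) (dim_row A) \<and> inverts_mat A X \<and> inverts_mat X A"
  then have "X \<in> carrier_mat n n" "X * A = 1\<^sub>m n" using assms(1) by (auto simp: inverts_mat_def)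
  then show "X = B"
    using assms by (metis assoc_mult_mat left_mult_one_mat right_mult_one_mat)
qed

lemma gram_Fmat_mult_Lmat: "(Fmat a n)\<^sup>T * Fmat a n * (Lmat a n * (Lmat a n)\<^sup>T) = 1\<^sub>m n"
proof -
  have "(Fmat a n)\<^sup>T * Fmat a n * (Lmat a n * (Lmat a n)\<^sup>T)
      = (Fmat a n)\<^sup>T * ((Fmat a n * Lmat a n) * (Lmat a n)\<^sup>T)"
    by (simp add: assoc_mult_mat[of _ n n _ n _ n] mult_carrier_mat[of _ n n _ n])
  also have "\<dots> = (Lmat a n * Fmat a n)\<^sup>T"
    by (simp add: Fmat_mult_Lmat transpose_mult[of _ n n _ n])
  finally show ?thesis by (simp add: Lmat_mult_Fmat)
qed

lemma inv_of_mat_gram_Fmat: "inv_of_mat ((Fmat a n)\<^sup>T * Fmat a n) = Lmat a n * (Lmat a n)\<^sup>T"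
  by (rule inv_of_mat_eqI[OF _ _ gram_Fmat_mult_Lmat]) auto

lemma gram_Fmat_sine_eigenvector:
  assumes "sin ((real n + 1) * w) = a * sin (real n * w)"
  defines "v \<equiv> vec n (\<lambda>l. sin ((real l + 1) * w))"
  shows "((Fmat a n)\<^sup>T * Fmat a n) *\<^sub>v v = gfun a w \<cdot>\<^sub>v v"
proof
  have sin_sum: "sin (t - w) + sin (t + w) = 2 * sin t * cos w" for t
    by (simp add: sin_add sin_diff)
  define u where "u j = sin ((real j + 1) * w) - a * sin (real j * w)" for j
  have Fv: "Fmat a n *\<^sub>v v = vec n u"
  proof
    fix i assume "i < dim_vec (vec n u)"
    then show "(Fmat a n *\<^sub>v v) $ i = vec n u $ i"
      by (subst Fmat_mult_vec_index) (auto simp: v_def u_def of_nat_diff)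
  qed (simp add: v_def)
  fix k assume "k < dim_vec (gfun a w \<cdot>\<^sub>v v)"
  then have "k < n" by (simp add: v_def)
  have "v \<in> carrier_vec n" by (simp add: v_def)
  then have "(((Fmat a n)\<^sup>T * Fmat a n) *\<^sub>v v) $ k = ((Fmat a n)\<^sup>T *\<^sub>v vec n u) $ k"
    by (simp add: assoc_mult_mat_vec[of _ n n _ n] Fv)
  also have "\<dots> = u k - (if Suc k < n then a * u (Suc k) else 0)"
    using transpose_Fmat_mult_vec_index[of "vec n u" n k a] \<open>k < n\<close> by simp
  also have "\<dots> = gfun a w * sin ((real k + 1) * w)"
  proof (cases "Suc k < n")
    case True
    have "u k - a * u (Suc k) = (1 + a\<^sup>2) * sin ((real k + 1) * w)
        - a * (sin ((real k + 1) * w - w) + sin ((real k + 1) * w + w))"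
      by (simp add: u_def algebra_simps power2_eq_square)
    then show ?thesis using True unfolding sin_sum gfun_def by (simp add: algebra_simps)
  next
    case False
    then have k: "real k + 1 = real n" using \<open>k < n\<close> by simp
    have "sin (real n * w - w) = 2 * sin (real n * w) * cos w - a * sin (real n * w)"
      using sin_sum[of "real n * w"] assms by (simp add: algebra_simps)
    moreover have "u k = sin (real n * w) - a * sin (real n * w - w)"
      using k unfolding u_def by (simp add: algebra_simps flip: k)
    ultimately have "u k = sin (real n * w) - a * (2 * sin (real n * w) * cos w - a * sin (real n * w))"
      by simp
    then show ?thesis
      using False unfolding k gfun_def by (simp add: algebra_simps power2_eq_square)
  qed
  finally show "(((Fmat a n)\<^sup>T * Fmat a n) *\<^sub>v v) $ k = (gfun a w \<cdot>\<^sub>v v) $ k"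
    using \<open>k < n\<close> by (simp add: v_def)
qed (simp add: v_def)

lemma sum_square_Fmat_row_le:
  fixes x :: "nat \<Rightarrow> real"
  assumes "0 \<le> a"
  shows "(\<Sum>k<n. (x k - (if 0 < k then a * x (k - 1) else 0))\<^sup>2) \<le> (1 + a)\<^sup>2 * (\<Sum>k<n. (x k)\<^sup>2)"
proof -
  define y where "y k = (if 0 < k then (x (k - 1))\<^sup>2 else 0)" for k
  have "(x k - (if 0 < k then a * x (k - 1) else 0))\<^sup>2 \<le> (1 + a) * ((x k)\<^sup>2 + a * y k)" for k
  proof -
    have "(1 + a) * ((x k)\<^sup>2 + a * (x (k - 1))\<^sup>2) - (x k - a * x (k - 1))\<^sup>2 = a * (x k + x (k - 1))\<^sup>2"
      by (simp add: power2_eq_square algebra_simps)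
    moreover have "0 \<le> a * (x k + x (k - 1))\<^sup>2" "(x k)\<^sup>2 \<le> (1 + a) * (x k)\<^sup>2"
      using assms by (simp_all add: algebra_simps)
    ultimately show ?thesis unfolding y_def by auto
  qed
  then have "(\<Sum>k<n. (x k - (if 0 < k then a * x (k - 1) else 0))\<^sup>2)
      \<le> (\<Sum>k<n. (1 + a) * ((x k)\<^sup>2 + a * y k))"
    by (rule sum_mono)
  also have "\<dots> = (1 + a) * ((\<Sum>k<n. (x k)\<^sup>2) + a * (\<Sum>k<n. y k))"
    by (simp add: sum.distrib flip: sum_distrib_left)
  also have "(\<Sum>k<n. y k) \<le> (\<Sum>k<n. (x k)\<^sup>2)"
  proof (cases n)
    case (Suc m)
    have "(\<Sum>k<Suc m. y k) = (\<Sum>k<m. (x k)\<^sup>2)"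
      by (simp only: sum.lessThan_Suc_shift) (simp add: y_def)
    then show ?thesis using Suc by simp
  qed simp
  then have "(1 + a) * ((\<Sum>k<n. (x k)\<^sup>2) + a * (\<Sum>k<n. y k)) \<le> (1 + a) * ((1 + a) * (\<Sum>k<n. (x k)\<^sup>2))"
    using assms by (intro mult_left_mono) (auto simp: algebra_simps intro: mult_left_mono)
  finally show ?thesis by (simp add: power2_eq_square mult.assoc)
qed

lemma orthogonal_conj_mult_inverse:
  fixes A B S :: "real mat"
  assumes carrier: "A \<in> carrier_mat n n" "B \<in> carrier_mat n n" "S \<in> carrier_mat n n"
    and "A * B = 1\<^sub>m n" and "S\<^sup>T * S = 1\<^sub>m n"
  shows "(S\<^sup>T * A * S) * (S\<^sup>T * B * S) = 1\<^sub>m n"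
proof -
  have "S * S\<^sup>T = 1\<^sub>m n"
    using mat_mult_left_right_inverse[OF _ carrier(3) \<open>S\<^sup>T * S = 1\<^sub>m n\<close>] carrier by simp
  have "(S\<^sup>T * A * S) * (S\<^sup>T * B * S) = S\<^sup>T * A * (S * S\<^sup>T) * B * S"
    using carrier by (simp add: assoc_mult_mat[of _ n n _ n _ n] mult_carrier_mat[of _ n n _ n])
  also have "\<dots> = S\<^sup>T * (A * B) * S"
    using carrier \<open>S * S\<^sup>T = 1\<^sub>m n\<close>
    by (simp add: assoc_mult_mat[of _ n n _ n _ n] mult_carrier_mat[of _ n n _ n])
  finally show ?thesis using carrier assms(4,5) by simp
qed

lemma mat_diag_inverse_eqI:
  fixes X :: "real mat"
  assumes "X \<in> carrier_mat n n" and "X * mat_diag n (\<lambda>i. 1 / d i) = 1\<^sub>m n"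
  shows "X = mat_diag n d" and "\<And>i. i < n \<Longrightarrow> d i \<noteq> 0"
proof -
  have entry: "X $$ (i, j) * (1 / d j) = (if i = j then 1 else 0)" if "i < n" "j < n" for i j
    using arg_cong[OF assms(2), of "\<lambda>Y. Y $$ (i, j)"] that assms(1)
    by (simp add: mat_diag_mult_right[OF assms(1)])
  show nonzero: "d i \<noteq> 0" if "i < n" for i
    \<comment> \<open>if d i = 0 then 1 / d i = 0, and the diagonal entry of the product would vanish\<close>
    using entry[OF that that] by auto
  show "X = mat_diag n d"
  proof (rule eq_matI)
    fix i j assume "i < dim_row (mat_diag n d)" "j < dim_col (mat_diag n d)"
    then have "i < n" "j < n" by (auto simp: mat_diag_def)
    then show "X $$ (i, j) = mat_diag n d $$ (i, j)"
      using entry[of i j] nonzero[of j] by (auto simp: mat_diag_def field_simps)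
  qed (use assms(1) in \<open>auto simp: mat_diag_def\<close>)
qed

section \<open>Spectrum of F'F\<close>

lemma stepwise_increasing_bounds:
  fixes p :: "nat \<Rightarrow> nat"
  assumes step: "\<And>i. i < m \<Longrightarrow> p i < p (Suc i)" and "j \<le> m"
  shows "p 0 + j \<le> p j" and "p j + (m - j) \<le> p m"
proof -
  show "p 0 + j \<le> p j"
    using \<open>j \<le> m\<close>
  proof (induction j)
    case (Suc j)
    then show ?case using step[of j] by simp
  qed simp
  show "p j + (m - j) \<le> p m"
    using \<open>j \<le> m\<close>
  proof (induction j rule: inc_induct)
    case (step j)
    then show ?case using assms(1)[of j] by (simp add: Suc_diff_Suc)
  qed simp
qed

locale ar_eigenbasis =
  fixes a :: real and n :: nat and S :: "real mat" and \<mu> :: "nat \<Rightarrow> real"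
  assumes a_pos: "0 < a"
    and S_carrier [simp]: "S \<in> carrier_mat n n"
    and S_orthogonal: "S\<^sup>T * S = 1\<^sub>m n"
    and \<mu>_sorted: "\<forall>i j. i \<le> j \<and> j < n \<longrightarrow> \<mu> i \<le> \<mu> j"
    and diagonalizes: "S\<^sup>T * inv_of_mat ((Fmat a n)\<^sup>T * Fmat a n) * S
      = mat n n (\<lambda>(i, j). if i = j then 1 / \<mu> i else 0)"
begin

abbreviation "F \<equiv> Fmat a n"

lemma S_dim [simp]: "dim_row S = n" "dim_col S = n"
  using carrier_matD[OF S_carrier] by auto

lemma inverse_gram_diagonalized: "S\<^sup>T * (Lmat a n * (Lmat a n)\<^sup>T) * S = mat_diag n (\<lambda>i. 1 / \<mu> i)"
  using diagonalizes unfolding inv_of_mat_gram_Fmat mat_diag_def by (auto intro: cong_mat)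

lemma gram_diagonalized: "S\<^sup>T * (F\<^sup>T * F) * S = mat_diag n \<mu>"
  and eigenvalue_nonzero: "i < n \<Longrightarrow> \<mu> i \<noteq> 0"
proof -
  have "S\<^sup>T * (F\<^sup>T * F) * S * (S\<^sup>T * (Lmat a n * (Lmat a n)\<^sup>T) * S) = 1\<^sub>m n"
    by (rule orthogonal_conj_mult_inverse[OF _ _ S_carrier gram_Fmat_mult_Lmat S_orthogonal])
      (simp_all add: mult_carrier_mat[of _ n n _ n])
  note * = mat_diag_inverse_eqI[OF _ this[unfolded inverse_gram_diagonalized]]
  show "S\<^sup>T * (F\<^sup>T * F) * S = mat_diag n \<mu>"
    by (rule *(1)) (simp add: mult_carrier_mat[of _ n n _ n])
  show "i < n \<Longrightarrow> \<mu> i \<noteq> 0"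
    by (rule *(2)) (simp_all add: mult_carrier_mat[of _ n n _ n])
qed

lemma eigenvalue_eq_sum_squares: "i < n \<Longrightarrow> \<mu> i = (\<Sum>k<n. ((F * S) $$ (k, i))\<^sup>2)"
proof -
  assume "i < n"
  have "(F * S)\<^sup>T * (F * S) = S\<^sup>T * (F\<^sup>T * F) * S"
    by (simp add: transpose_mult[of _ n n _ n] assoc_mult_mat[of _ n n _ n _ n] mult_carrier_mat[of _ n n _ n])
  then have "\<mu> i = ((F * S)\<^sup>T * (F * S)) $$ (i, i)"
    using \<open>i < n\<close> by (simp add: gram_diagonalized mat_diag_def)
  then show ?thesis
    using \<open>i < n\<close> by (simp add: scalar_prod_def atLeast0LessThan power2_eq_square)
qed

lemma eigenvalue_pos: "i < n \<Longrightarrow> 0 < \<mu> i"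
  using eigenvalue_eq_sum_squares eigenvalue_nonzero
  by (metis (no_types, lifting) order_le_less sum_nonneg zero_le_power2)

lemma eigenvalue_le: "i < n \<Longrightarrow> \<mu> i \<le> (1 + a)\<^sup>2"
proof -
  assume "i < n"
  have "(\<Sum>k<n. (S $$ (k, i))\<^sup>2) = (S\<^sup>T * S) $$ (i, i)"
    using \<open>i < n\<close> by (simp add: scalar_prod_def atLeast0LessThan power2_eq_square)
  then have unit: "(\<Sum>k<n. (S $$ (k, i))\<^sup>2) = 1"
    using \<open>i < n\<close> by (simp add: S_orthogonal)
  have "(F * S) $$ (k, i) = S $$ (k, i) - (if 0 < k then a * S $$ (k - 1, i) else 0)" if "k < n" for k
    using sum_Fmat_row[OF that, of a "\<lambda>l. S $$ (l, i)"] that \<open>i < n\<close>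
    by (simp add: scalar_prod_def atLeast0LessThan)
  then show ?thesis
    using sum_square_Fmat_row_le[where a = a and n = n and x = "\<lambda>k. S $$ (k, i)"] a_pos \<open>i < n\<close>
    by (simp add: eigenvalue_eq_sum_squares unit)
qed

lemma sum_ln_eigenvalues: "(\<Sum>i<n. ln (\<mu> i)) = 0"
proof -
  have "det (mat_diag n \<mu>) = det (S\<^sup>T * (F\<^sup>T * F) * S)"
    by (simp add: gram_diagonalized)
  also have "\<dots> = det (S\<^sup>T * S) * (det F\<^sup>T * det F)"
    by (simp add: det_mult[of _ n] mult_carrier_mat[of _ n n _ n] mult_ac)
  also have "\<dots> = 1"
    by (simp add: S_orthogonal det_transpose[OF Fmat_carrier] det_Fmat)
  finally have "det (mat_diag n \<mu>) = 1" .
  moreover have "det (mat_diag n \<mu>) = (\<Prod>i<n. \<mu> i)"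
    by (subst det_lower_triangular[of n]) (auto simp: mat_diag_def prod_list_diag_prod atLeast0LessThan)
  ultimately show ?thesis
    using ln_prod[of "{..<n}" \<mu>] eigenvalue_nonzero by simp
qed

lemma eigenvalue_of_eigenvector:
  assumes "v \<in> carrier_vec n" "v \<noteq> 0\<^sub>v n" "(F\<^sup>T * F) *\<^sub>v v = \<nu> \<cdot>\<^sub>v v"
  shows "\<exists>i<n. \<mu> i = \<nu>"
proof -
  define c where "c = S\<^sup>T *\<^sub>v v"
  have c_carrier: "c \<in> carrier_vec n"
    unfolding c_def by (rule mult_mat_vec_carrier[OF _ assms(1)]) simp
  have "S * S\<^sup>T = 1\<^sub>m n"
    using mat_mult_left_right_inverse[OF _ S_carrier S_orthogonal] by simp
  then have "S *\<^sub>v c = v"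
    using assms(1) unfolding c_def by (subst assoc_mult_mat_vec[of _ n n _ n, symmetric]) auto
  have "\<exists>i<n. c $ i \<noteq> 0"
  proof (rule ccontr)
    assume none: "\<not> (\<exists>i<n. c $ i \<noteq> 0)"
    have "v $ k = 0" if "k < n" for k
    proof -
      have "v $ k = (\<Sum>j<n. S $$ (k, j) * c $ j)"
        unfolding \<open>S *\<^sub>v c = v\<close>[symmetric] using that c_carrier
        by (simp add: scalar_prod_def atLeast0LessThan)
      then show ?thesis using none by simp
    qed
    then have "v = 0\<^sub>v n" using assms(1) by (simp add: vec_eq_iff)
    with assms(2) show False ..
  qed
  then obtain i where "i < n" "c $ i \<noteq> 0" by blast
  have "mat_diag n \<mu> *\<^sub>v c = (S\<^sup>T * (F\<^sup>T * F)) *\<^sub>v (S *\<^sub>v c)"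
    unfolding gram_diagonalized[symmetric] using c_carrier
    by (subst assoc_mult_mat_vec[of _ n n _ n]) (auto simp: mult_carrier_mat[of _ n n _ n])
  also have "\<dots> = S\<^sup>T *\<^sub>v (\<nu> \<cdot>\<^sub>v v)"
    unfolding \<open>S *\<^sub>v c = v\<close> assms(3)[symmetric] using assms(1)
    by (subst assoc_mult_mat_vec[of _ n n _ n]) (auto simp: mult_carrier_mat[of _ n n _ n])
  also have "\<dots> = \<nu> \<cdot>\<^sub>v c"
    unfolding c_def using assms(1) by (simp add: mult_mat_vec[of _ n n])
  finally have "(mat_diag n \<mu> *\<^sub>v c) $ i = \<nu> * c $ i"
    using \<open>i < n\<close> c_carrier by simp
  moreover have "(mat_diag n \<mu> *\<^sub>v c) $ i = (\<Sum>k\<in>{0..<n}. (if i = k then \<mu> k else 0) * c $ k)"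
    using \<open>i < n\<close> c_carrier by (simp add: mat_diag_def scalar_prod_def)
  moreover have "\<dots> = (\<Sum>k\<in>{0..<n}. if i = k then \<mu> k * c $ k else 0)"
    by (intro sum.cong) auto
  moreover have "\<dots> = \<mu> i * c $ i"
    using \<open>i < n\<close> by simp
  ultimately show ?thesis using \<open>c $ i \<noteq> 0\<close> \<open>i < n\<close> by auto
qed

lemma eigenvalue_in_gap:
  assumes "1 \<le> k" "k + 1 < n"
  shows "\<exists>w p. real k * pi / n < w \<and> w < real (k + 1) * pi / n \<and> p < n \<and> \<mu> p = gfun a w"
proof -
  obtain w where w: "real k * pi / n < w" "w < real (k + 1) * pi / n"
    and secular: "sin ((real n + 1) * w) = a * sin (real n * w)"
    using secular_equation_root[OF assms] by blast
  have "real (k + 1) * pi \<le> real n * pi" using assms by (intro mult_right_mono) auto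
  then have "real (k + 1) * pi / n \<le> pi" using assms by (simp add: divide_le_eq)
  moreover have "0 \<le> real k * pi / n" by simp
  ultimately have "0 < w" "w < pi" using w by linarith+
  define v where "v = vec n (\<lambda>l. sin ((real l + 1) * w))"
  have "v $ 0 \<noteq> 0" using sin_gt_zero[OF \<open>0 < w\<close> \<open>w < pi\<close>] assms by (simp add: v_def)
  then have "v \<noteq> 0\<^sub>v n" using assms by auto
  then obtain p where "p < n" "\<mu> p = gfun a w"
    using eigenvalue_of_eigenvector[of v] gram_Fmat_sine_eigenvector[OF secular] by (auto simp: v_def)
  with w show ?thesis by blast
qed

lemma gap_eigenvalue_index_bounds:
  assumes gaps: "\<And>j. j + 2 < n \<Longrightarrow>
      real (j + 1) * pi / n < W j \<and> W j < real (j + 2) * pi / n \<and> P j < n \<and> \<mu> (P j) = gfun a (W j)"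
    and "j + 2 < n"
  shows "j \<le> P j \<and> P j \<le> j + 2"
proof -
  \<comment> \<open>g increases on [0, pi] and \<mu> is sorted, so P is strictly increasing on the n - 2 gaps\<close>
  define m where "m = n - 3"
  have P_step: "P i < P (Suc i)" if "i < m" for i
  proof (rule ccontr)
    assume "\<not> P i < P (Suc i)"
    have i: "i + 2 < n" "Suc i + 2 < n" using that by (auto simp: m_def)
    have "P (Suc i) \<le> P i" "P i < n" using \<open>\<not> P i < P (Suc i)\<close> gaps[OF i(1)] by auto
    then have "\<mu> (P (Suc i)) \<le> \<mu> (P i)" using \<mu>_sorted by simp
    moreover have "gfun a (W i) < gfun a (W (Suc i))"
    proof (rule gfun_strict_mono[OF a_pos])
      show "0 \<le> W i" "W (Suc i) \<le> pi"
        using gap_point_in_interval[OF i(1) pi_ge_zero, of "W i"]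
          gap_point_in_interval[OF i(2) pi_ge_zero, of "W (Suc i)"] gaps[OF i(1)] gaps[OF i(2)] by auto
      show "W i < W (Suc i)" using gaps[OF i(1)] gaps[OF i(2)] by auto
    qed
    ultimately show False using gaps[OF i(1)] gaps[OF i(2)] by auto
  qed
  have "j \<le> m" "m + 2 < n" "n = m + 3" using assms(2) by (auto simp: m_def)
  then show ?thesis
    using stepwise_increasing_bounds[where p = P, OF P_step \<open>j \<le> m\<close>] gaps[OF \<open>m + 2 < n\<close>] by auto
qed

lemma eigenvalues_interlace_samples:
  assumes "j + 2 < n"
  shows "gfun a (real (j + 1) * pi / n) \<le> \<mu> (j + 2)" and "\<mu> j \<le> gfun a (real (j + 2) * pi / n)"
proof -
  have "\<forall>j. \<exists>w p. j + 2 < n \<longrightarrow>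
      real (j + 1) * pi / n < w \<and> w < real (j + 2) * pi / n \<and> p < n \<and> \<mu> p = gfun a w"
    using eigenvalue_in_gap[of "j + 1" for j] by (metis Suc_eq_plus1 add_2_eq_Suc' le_add2)
  then obtain W P where gaps: "\<And>j. j + 2 < n \<Longrightarrow>
      real (j + 1) * pi / n < W j \<and> W j < real (j + 2) * pi / n \<and> P j < n \<and> \<mu> (P j) = gfun a (W j)"
    by metis
  have "j \<le> P j" "P j \<le> j + 2" using gap_eigenvalue_index_bounds[OF gaps assms] by auto
  have Wj: "real (j + 1) * pi / n < W j" "W j < real (j + 2) * pi / n" "\<mu> (P j) = gfun a (W j)"
    and "P j < n"
    using gaps[OF assms] by auto
  have "W j \<in> {0..pi}" using gap_point_in_interval[OF assms pi_ge_zero Wj(1,2)] .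
  have mono: "mono_on {0..pi} (gfun a)" using a_pos by (rule gfun_mono_on)
  have "gfun a (real (j + 1) * pi / n) \<le> gfun a (W j)"
    by (rule mono_onD[OF mono]) (use node_in_interval[of "j + 1" n pi] \<open>W j \<in> {0..pi}\<close> Wj assms in auto)
  also have "\<dots> = \<mu> (P j)" using Wj by simp
  also have "\<dots> \<le> \<mu> (j + 2)" using \<mu>_sorted \<open>P j \<le> j + 2\<close> assms by auto
  finally show "gfun a (real (j + 1) * pi / n) \<le> \<mu> (j + 2)" .
  have "\<mu> j \<le> \<mu> (P j)" using \<mu>_sorted \<open>j \<le> P j\<close> \<open>P j < n\<close> by auto
  also have "\<dots> = gfun a (W j)" using Wj by simp
  also have "\<dots> \<le> gfun a (real (j + 2) * pi / n)"
    by (rule mono_onD[OF mono]) (use node_in_interval[of "j + 2" n pi] \<open>W j \<in> {0..pi}\<close> Wj assms in auto)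
  finally show "\<mu> j \<le> gfun a (real (j + 2) * pi / n)" .
qed

lemma spectral_average_approx:
  fixes h :: "real \<Rightarrow> real"
  assumes "a \<noteq> 1" "0 < n"
    and mono: "mono_on {0<..} h" and cont: "continuous_on {0<..} h"
    and bound: "\<And>t. 0 < t \<Longrightarrow> t \<le> (1 + a)\<^sup>2 \<Longrightarrow> \<bar>h t\<bar> \<le> B"
  shows "\<bar>(\<Sum>i<n. h (\<mu> i)) / n - 1 / (2 * pi) * integral {-pi..pi} (\<lambda>w. h (gfun a w))\<bar> \<le> 6 * B / n"
proof -
  have g_pos: "0 < gfun a w" for w using gfun_pos a_pos assms(1) by simp
  have g_cont: "continuous_on A (\<lambda>w. h (gfun a w))" for A
    by (rule continuous_on_compose2[OF cont continuous_on_gfun]) (use g_pos in auto)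
  have "\<bar>(\<Sum>i<n. h (\<mu> i)) - n / pi * integral {0..pi} (\<lambda>w. h (gfun a w))\<bar> \<le> 6 * B"
  proof (rule interlaced_sum_approx_integral)
    show "mono_on {0..pi} (\<lambda>w. h (gfun a w))"
      using mono_onD[OF mono] mono_onD[OF gfun_mono_on[OF a_pos]] g_pos
      by (intro mono_onI) auto
    show "\<bar>h (gfun a w)\<bar> \<le> B" for w using bound g_pos gfun_bounds a_pos by simp
    show "\<bar>h (\<mu> i)\<bar> \<le> B" if "i < n" for i using bound eigenvalue_pos eigenvalue_le that by simp
    show "h (gfun a (real (j + 1) * pi / n)) \<le> h (\<mu> (j + 2))"
      and "h (\<mu> j) \<le> h (gfun a (real (j + 2) * pi / n))" if "j + 2 < n" for j
      using eigenvalues_interlace_samples[OF that] mono_onD[OF mono] g_pos eigenvalue_pos that by auto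
  qed (use assms g_cont in auto)
  moreover have "integral {-pi..pi} (\<lambda>w. h (gfun a w)) = 2 * integral {0..pi} (\<lambda>w. h (gfun a w))"
    by (rule integral_even_symmetric) (auto intro: g_cont)
  ultimately show ?thesis
    using \<open>0 < n\<close> by (simp add: field_simps abs_div flip: abs_mult)
qed

lemma spectral_average_approx_antimono:
  fixes h :: "real \<Rightarrow> real"
  assumes "a \<noteq> 1" "0 < n"
    and antitone: "antimono_on {0<..} h" and cont: "continuous_on {0<..} h"
    and bound: "\<And>t. 0 < t \<Longrightarrow> t \<le> (1 + a)\<^sup>2 \<Longrightarrow> \<bar>h t\<bar> \<le> B"
  shows "\<bar>(\<Sum>i<n. h (\<mu> i)) / n - 1 / (2 * pi) * integral {-pi..pi} (\<lambda>w. h (gfun a w))\<bar> \<le> 6 * B / n"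
proof -
  have "mono_on {0<..} (\<lambda>t. - h t)"
    using monotone_onD[OF antitone] by (intro mono_onI) auto
  moreover have "continuous_on {0<..} (\<lambda>t. - h t)"
    using cont by (intro continuous_intros)
  ultimately have "\<bar>(\<Sum>i<n. - h (\<mu> i)) / n - 1 / (2 * pi) * integral {-pi..pi} (\<lambda>w. - h (gfun a w))\<bar> \<le> 6 * B / n"
    using bound by (intro spectral_average_approx assms(1,2)) auto
  then show ?thesis by (simp add: sum_negf abs_minus_commute)
qed

lemma rate_sum_approx:
  assumes "a \<noteq> 1" "0 < n" "0 < c"
  shows "\<bar>(\<Sum>i<n. 1/2 * ln (max (\<mu> i) c)) / n
      - 1 / (2 * pi) * integral {-pi..pi} (\<lambda>w. 1/2 * ln (max (gfun a w) c))\<bar>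
    \<le> 6 * (\<bar>ln c\<bar> + \<bar>ln ((1 + a)\<^sup>2)\<bar>) / n"
proof (rule spectral_average_approx[OF assms(1,2), where h = "\<lambda>t. 1/2 * ln (max t c)"])
  show "mono_on {0<..} (\<lambda>t. 1/2 * ln (max t c))"
    using \<open>0 < c\<close> by (intro mono_onI) auto
  show "continuous_on {0<..} (\<lambda>t. 1/2 * ln (max t c))"
    using \<open>0 < c\<close> by (intro continuous_intros) auto
  show "\<bar>1/2 * ln (max t c)\<bar> \<le> \<bar>ln c\<bar> + \<bar>ln ((1 + a)\<^sup>2)\<bar>" if "0 < t" "t \<le> (1 + a)\<^sup>2" for t
  proof -
    have "ln c \<le> ln (max t c)" "ln (max t c) \<le> ln (max ((1 + a)\<^sup>2) c)"
      using that \<open>0 < c\<close> by auto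
    moreover have "ln (max ((1 + a)\<^sup>2) c) \<le> \<bar>ln c\<bar> + \<bar>ln ((1 + a)\<^sup>2)\<bar>"
      by (auto simp: max_def)
    ultimately show ?thesis by linarith
  qed
qed

lemma dispersion_sum_approx:
  assumes "a \<noteq> 1" "0 < n" "0 < c" "0 < \<theta>"
  shows "\<bar>(\<Sum>i<n. 1/2 * min 1 ((c / (\<theta> * \<mu> i))\<^sup>2)) / n
      - 1 / (4 * pi) * integral {-pi..pi} (\<lambda>w. min 1 ((c / (\<theta> * gfun a w))\<^sup>2))\<bar> \<le> 6 / n"
proof -
  have "\<bar>(\<Sum>i<n. 1/2 * min 1 ((c / (\<theta> * \<mu> i))\<^sup>2)) / n
      - 1 / (2 * pi) * integral {-pi..pi} (\<lambda>w. 1/2 * min 1 ((c / (\<theta> * gfun a w))\<^sup>2))\<bar> \<le> 6 * 1 / n"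
  proof (rule spectral_average_approx_antimono[OF assms(1,2), where h = "\<lambda>t. 1/2 * min 1 ((c / (\<theta> * t))\<^sup>2)"])
    show "antimono_on {0<..} (\<lambda>t. 1/2 * min 1 ((c / (\<theta> * t))\<^sup>2))"
    proof (intro monotone_onI)
      fix s t :: real assume "s \<in> {0<..}" "s \<le> t"
      then have "c / (\<theta> * t) \<le> c / (\<theta> * s)" "0 \<le> c / (\<theta> * t)"
        using assms(3,4) by (auto intro!: divide_left_mono mult_left_mono)
      then have "(c / (\<theta> * t))\<^sup>2 \<le> (c / (\<theta> * s))\<^sup>2" by (intro power_mono)
      then show "1/2 * min 1 ((c / (\<theta> * t))\<^sup>2) \<le> 1/2 * min 1 ((c / (\<theta> * s))\<^sup>2)"
        by (auto simp: min_def)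
    qed
    show "continuous_on {0<..} (\<lambda>t. 1/2 * min 1 ((c / (\<theta> * t))\<^sup>2))"
      using \<open>0 < \<theta>\<close> by (intro continuous_intros) auto
  qed auto
  then show ?thesis by simp
qed

end

section \<open>Moments of the tilted information\<close>

lemma AR_eq_sum: "AR a Z k \<omega> = (\<Sum>m\<in>{1..k}. a ^ (k - m) * Z m \<omega>)"
proof (induction k)
  case (Suc k)
  have "a * (\<Sum>m\<in>{1..k}. a ^ (k - m) * Z m \<omega>) = (\<Sum>m\<in>{1..k}. a ^ (Suc k - m) * Z m \<omega>)"
    unfolding sum_distrib_left by (intro sum.cong) (auto simp: Suc_diff_le)
  then show ?case using Suc by simp
qed simp

context ar_eigenbasis
begin

lemma coordinate_eq_noise_sum:
  "(\<Sum>k<n. S $$ (k, i) * AR a Z (Suc k) \<omega>) = (\<Sum>m\<in>{1..n}. (S\<^sup>T * Lmat a n) $$ (i, m - 1) * Z m \<omega>)"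
  if "i < n"
proof -
  have "AR a Z (Suc k) \<omega> = (\<Sum>m\<in>{1..n}. Lmat a n $$ (k, m - 1) * Z m \<omega>)" if "k < n" for k
  proof -
    have "(\<Sum>m\<in>{1..n}. Lmat a n $$ (k, m - 1) * Z m \<omega>)
        = (\<Sum>m\<in>{1..n}. if m \<le> Suc k then a ^ (Suc k - m) * Z m \<omega> else 0)"
      using that by (intro sum.cong) (auto simp: Lmat_def Suc_diff_le)
    also have "\<dots> = (\<Sum>m\<in>{1..Suc k}. if m \<le> Suc k then a ^ (Suc k - m) * Z m \<omega> else 0)"
      using that by (intro sum.mono_neutral_right) auto
    also have "\<dots> = (\<Sum>m\<in>{1..Suc k}. a ^ (Suc k - m) * Z m \<omega>)"
      by simp
    finally show ?thesis by (simp add: AR_eq_sum)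
  qed
  then have "(\<Sum>k<n. S $$ (k, i) * AR a Z (Suc k) \<omega>)
      = (\<Sum>k<n. \<Sum>m\<in>{1..n}. S $$ (k, i) * Lmat a n $$ (k, m - 1) * Z m \<omega>)"
    by (simp add: sum_distrib_left mult.assoc)
  also have "\<dots> = (\<Sum>m\<in>{1..n}. (\<Sum>k<n. S $$ (k, i) * Lmat a n $$ (k, m - 1)) * Z m \<omega>)"
    by (subst sum.swap) (simp add: sum_distrib_right)
  also have "\<dots> = (\<Sum>m\<in>{1..n}. (S\<^sup>T * Lmat a n) $$ (i, m - 1) * Z m \<omega>)"
    using that by (intro sum.cong refl) (auto simp: scalar_prod_def atLeast0LessThan)
  finally show ?thesis .
qed

lemma noise_weights_orthogonal:
  "(\<Sum>m\<in>{1..n}. (S\<^sup>T * Lmat a n) $$ (i, m - 1) * (S\<^sup>T * Lmat a n) $$ (j, m - 1))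
    = (if i = j then 1 / \<mu> i else 0)"
  if "i < n" "j < n"
proof -
  have "(S\<^sup>T * Lmat a n) * (S\<^sup>T * Lmat a n)\<^sup>T = S\<^sup>T * (Lmat a n * (Lmat a n)\<^sup>T) * S"
    by (simp add: transpose_mult[of _ n n _ n] assoc_mult_mat[of _ n n _ n _ n] mult_carrier_mat[of _ n n _ n])
  then have "((S\<^sup>T * Lmat a n) * (S\<^sup>T * Lmat a n)\<^sup>T) $$ (i, j) = (if i = j then 1 / \<mu> i else 0)"
    using that by (simp add: inverse_gram_diagonalized mat_diag_def)
  moreover have "(\<Sum>m\<in>{1..n}. (S\<^sup>T * Lmat a n) $$ (i, m - 1) * (S\<^sup>T * Lmat a n) $$ (j, m - 1))
      = ((S\<^sup>T * Lmat a n) * (S\<^sup>T * Lmat a n)\<^sup>T) $$ (i, j)"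
    using that by (simp add: scalar_prod_def sum.atLeast1_atMost_eq atLeast0LessThan)
  ultimately show ?thesis by simp
qed

lemma tilted_information_moments:
  fixes M :: "'a measure" and Z :: "nat \<Rightarrow> 'a \<Rightarrow> real" and \<sigma>2 \<theta> :: real
  assumes "centered_gaussian_family M Z {1..} (sqrt \<sigma>2)" and "0 < \<sigma>2" and "0 < \<theta>"
  defines "J \<equiv> \<lambda>\<omega>. jtilted n (\<lambda>i. \<sigma>2 / \<mu> i) \<theta> (\<lambda>i. \<Sum>k<n. S $$ (k, i) * AR a Z (Suc k) \<omega>)"
  shows "prob_space.expectation M J = (\<Sum>i<n. 1/2 * ln (max (\<mu> i) (\<sigma>2 / \<theta>)))"
    and "prob_space.variance M J = (\<Sum>i<n. 1/2 * min 1 ((\<sigma>2 / (\<theta> * \<mu> i))\<^sup>2))"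
proof -
  interpret centered_gaussian_family M Z "{1..}" "sqrt \<sigma>2" by (fact assms(1))
  define b where "b i m = (S\<^sup>T * Lmat a n) $$ (i, m - 1)" for i m
  have J_eq: "J = (\<lambda>\<omega>. jtilted n (\<lambda>i. \<sigma>2 / \<mu> i) \<theta> (\<lambda>i. \<Sum>m\<in>{1..n}. b i m * Z m \<omega>))"
    unfolding J_def b_def jtilted_def
    by (intro ext sum.cong refl arg_cong2[where f = "(+)"]) (simp del: AR.simps add: coordinate_eq_noise_sum)
  have cov: "(sqrt \<sigma>2)\<^sup>2 * (\<Sum>m\<in>{1..n}. b i m * b j m) = (if i = j then \<sigma>2 / \<mu> i else 0)"
    if "i < n" "j < n" for i j
    using noise_weights_orthogonal[OF that] \<open>0 < \<sigma>2\<close> by (simp add: b_def)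
  have EJ: "expectation J = 1/2 * (\<Sum>i<n. ln (max \<theta> (\<sigma>2 / \<mu> i) / \<theta>))"
    unfolding J_eq by (rule jtilted_moments(1)) (use cov eigenvalue_pos assms(2,3) in auto)
  have VJ: "variance J = 1/2 * (\<Sum>i<n. (min 1 (\<sigma>2 / \<mu> i / \<theta>))\<^sup>2)"
    unfolding J_eq by (rule jtilted_moments(2)) (use cov eigenvalue_pos assms(2,3) in auto)
  have ln_term: "ln (max \<theta> (\<sigma>2 / \<mu> i) / \<theta>) = ln (max (\<mu> i) (\<sigma>2 / \<theta>)) - ln (\<mu> i)"
    if "i < n" for i
  proof -
    have "max \<theta> (\<sigma>2 / \<mu> i) / \<theta> = max (\<mu> i) (\<sigma>2 / \<theta>) / \<mu> i"
      using eigenvalue_pos[OF that] \<open>0 < \<theta>\<close> by (auto simp: max_def field_simps)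
    then show ?thesis
      using eigenvalue_pos[OF that] \<open>0 < \<sigma>2\<close> \<open>0 < \<theta>\<close> by (simp add: ln_div)
  qed
  have "(\<Sum>i<n. ln (max \<theta> (\<sigma>2 / \<mu> i) / \<theta>)) = (\<Sum>i<n. ln (max (\<mu> i) (\<sigma>2 / \<theta>)) - ln (\<mu> i))"
    by (intro sum.cong refl ln_term) simp
  also have "\<dots> = (\<Sum>i<n. ln (max (\<mu> i) (\<sigma>2 / \<theta>)))"
    by (simp add: sum_subtractf sum_ln_eigenvalues)
  finally show "expectation J = (\<Sum>i<n. 1/2 * ln (max (\<mu> i) (\<sigma>2 / \<theta>)))"
    unfolding EJ by (simp add: sum_distrib_left)
  have min_square: "(min 1 x)\<^sup>2 = min 1 (x\<^sup>2)" if "0 \<le> x" for x :: real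
    using that power_le_one[of x 2] one_le_power[of x 2] by (cases "x \<le> 1") (auto simp: min_def)
  have "(min 1 (\<sigma>2 / \<mu> i / \<theta>))\<^sup>2 = min 1 ((\<sigma>2 / (\<theta> * \<mu> i))\<^sup>2)" if "i < n" for i
    using min_square[of "\<sigma>2 / (\<theta> * \<mu> i)"] eigenvalue_pos[OF that] \<open>0 < \<sigma>2\<close> \<open>0 < \<theta>\<close>
    by (simp add: mult.commute divide_divide_eq_left)
  then show "variance J = (\<Sum>i<n. 1/2 * min 1 ((\<sigma>2 / (\<theta> * \<mu> i))\<^sup>2))"
    unfolding VJ by (simp add: sum_distrib_left)
qed

end

theorem proposition1:
  fixes M :: "'a measure" and Z :: "nat \<Rightarrow> 'a \<Rightarrow> real"
    and a \<sigma>2 d \<theta> :: real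
  assumes "prob_space M"
    and a: "a > 1" and sig: "\<sigma>2 > 0"
    and d: "0 < d" "d < \<sigma>2 / (a\<^sup>2 - 1)"
    and Zind: "prob_space.indep_vars M (\<lambda>_. borel) Z {1..}"
    and Zdist: "\<And>i. i \<ge> 1 \<Longrightarrow> distributed M lborel (Z i) (normal_density 0 (sqrt \<sigma>2))"
    and th: "\<theta> > 0"
      "d = 1 / (2 * pi) * integral {-pi..pi} (\<lambda>w. min \<theta> (\<sigma>2 / gfun a w))"
  shows "\<exists>C1 C2. C1 > 0 \<and> C2 > 0 \<and>
    (\<forall>n \<ge> 1. \<forall>(S :: real mat) (\<mu> :: nat \<Rightarrow> real).
       S \<in> carrier_mat n n \<and> transpose_mat S * S = 1\<^sub>m n \<and>
       (\<forall>i j. i \<le> j \<and> j < n \<longrightarrow> \<mu> i \<le> \<mu> j) \<and>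
       transpose_mat S * inv_of_mat (transpose_mat (Fmat a n) * Fmat a n) * S
         = mat n n (\<lambda>(i, j). if i = j then 1 / \<mu> i else 0)
     \<longrightarrow>
       (let s = (\<lambda>i. \<sigma>2 / \<mu> i);
            J = (\<lambda>\<omega>. jtilted n s \<theta> (\<lambda>i. \<Sum>k<n. S $$ (k, i) * AR a Z (Suc k) \<omega>))
        in \<bar>prob_space.expectation M J / n
              - 1 / (2 * pi) * integral {-pi..pi} (\<lambda>w. 1/2 * ln (max (gfun a w) (\<sigma>2 / \<theta>)))\<bar>
             \<le> C1 / n
         \<and> \<bar>prob_space.variance M J / n
              - 1 / (4 * pi) * integral {-pi..pi} (\<lambda>w. min 1 ((\<sigma>2 / (\<theta> * gfun a w))\<^sup>2))\<bar>
             \<le> C2 / n))"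
proof -
  define B where "B = \<bar>ln (\<sigma>2 / \<theta>)\<bar> + \<bar>ln ((1 + a)\<^sup>2)\<bar>"
  have "0 < ln ((1 + a)\<^sup>2)" using a by (intro ln_gt_zero one_less_power) auto
  then have "0 < B" by (simp add: B_def)
  have noise: "centered_gaussian_family M Z {1..} (sqrt \<sigma>2)"
    using assms(1) Zind Zdist sig
    by (auto simp: centered_gaussian_family_def centered_gaussian_family_axioms_def)
  show ?thesis
  proof (rule exI[of _ "6 * B"], rule exI[of _ 6], intro conjI allI impI, goal_cases)
    case (3 n S \<mu>)
    then interpret ar_eigenbasis a n S \<mu> using a by unfold_locales auto
    have "a \<noteq> 1" "0 < n" using a 3 by auto
    note moments = tilted_information_moments[OF noise sig th(1)]
    show ?case
      unfolding Let_def B_def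
      using rate_sum_approx[OF \<open>a \<noteq> 1\<close> \<open>0 < n\<close>, where c = "\<sigma>2 / \<theta>"]
        dispersion_sum_approx[OF \<open>a \<noteq> 1\<close> \<open>0 < n\<close> sig th(1)] sig th(1)
      by (subst moments(2), subst moments(1)) auto
  qed (use \<open>0 < B\<close> in auto)
qed

end
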